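(* Let $(c_n)_{n\in\mathbb{Z}}$ be real numbers with $\sum_{n\in\mathbb{Z}}n^2c_n^2<\infty$, and for $j\in\{0,1,2\}$ let $g_j(\theta)=\sum_{n\in\mathbb{Z}}n^jc_n^2e^{in\theta}$, $g=g_0$. Then for every $\theta\in\mathbb{R}$, \[ |g(0)g_1(\theta)-g_1(0)g(\theta)|^2\le\left(g(0)g_2(0)-g_1^2(0)\right)\left(g^2(0)-|g(\theta)|^2\right). \] *)

theory Defs
  imports "HOL-Analysis.Analysis"
begin

definition gj :: "nat \<Rightarrow> (int \<Rightarrow> real) \<Rightarrow> real \<Rightarrow> complex" where
  "gj j c \<theta> = (\<Sum>\<^sub>\<infinity>n\<in>(UNIV::int set).
      complex_of_real ((real_of_int n) ^ j * (c n)^2) * cis (real_of_int n * \<theta>))"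

end

theory Submission
  imports Defs
begin

(* Put w n = c n^2 and let A, B, C be the moments of order 0, 1, 2 of w, so that g(0) = A,
   g_1(0) = B, g_2(0) = C. The sequences a n = A n - B and b n = A e^{in\<theta>} - g(\<theta>) satisfy
   \<Sum> w a conj(b) = A conj(A g_1(\<theta>) - B g(\<theta>)), \<Sum> w a^2 = A (A C - B^2) and, because
   |e^{in\<theta>}| = 1, \<Sum> w |b|^2 = A (A^2 - |g(\<theta>)|^2). The Cauchy-Schwarz inequality for the
   weights w gives the claim multiplied by A^2; for A = 0 it is an identity. *)

lemma abs_of_int_le_square: "\<bar>real_of_int n\<bar> \<le> (real_of_int n)\<^sup>2"
proof (cases "n = 0")
  case False
  then have "\<bar>real_of_int n\<bar> * 1 \<le> \<bar>real_of_int n\<bar> * \<bar>real_of_int n\<bar>"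
    by (intro mult_left_mono) linarith+
  then show ?thesis
    by (simp add: power2_eq_square)
qed simp

lemma summable_on_lower_moments:
  fixes w :: "int \<Rightarrow> real"
  assumes w_nonneg: "\<And>n. w n \<ge> 0"
    and second_moment: "(\<lambda>n. (real_of_int n)\<^sup>2 * w n) summable_on UNIV"
  shows "w summable_on UNIV" "(\<lambda>n. real_of_int n * w n) summable_on UNIV"
proof -
  have abs_first_moment: "(\<lambda>n. \<bar>real_of_int n\<bar> * w n) summable_on UNIV"
    using second_moment
    by (rule summable_on_comparison_test)
      (simp_all add: w_nonneg abs_of_int_le_square mult_right_mono)
  then have "(\<lambda>n. norm (real_of_int n * w n)) summable_on UNIV"
    by (simp add: abs_mult w_nonneg)
  then show "(\<lambda>n. real_of_int n * w n) summable_on UNIV"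
    by (rule abs_summable_summable)
  have "(\<lambda>n. \<bar>real_of_int n\<bar> * w n) summable_on (UNIV - {0})"
    using abs_first_moment by (rule summable_on_cofin_subset) simp
  then have "w summable_on (UNIV - {0})"
  proof (rule summable_on_comparison_test)
    fix n :: int
    assume "n \<in> UNIV - {0}"
    then have "n \<noteq> 0"
      by simp
    then have "1 \<le> \<bar>real_of_int n\<bar>"
      by linarith
    then show "w n \<le> \<bar>real_of_int n\<bar> * w n"
      using w_nonneg[of n] by (simp add: mult_le_cancel_right1)
  qed (rule w_nonneg)
  then show "w summable_on UNIV"
    using summable_on_insert_iff[of w 0 "UNIV - {0}"] by (simp add: insert_absorb)
qed

lemma has_sum_weighted_Cauchy_Schwarz:
  fixes w :: "'a \<Rightarrow> real" and f g :: "'a \<Rightarrow> complex"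
  assumes w_nonneg: "\<And>x. x \<in> I \<Longrightarrow> w x \<ge> 0"
    and P: "((\<lambda>x. w x * (cmod (f x))\<^sup>2) has_sum P) I"
    and Q: "((\<lambda>x. w x * (cmod (g x))\<^sup>2) has_sum Q) I"
    and S: "((\<lambda>x. of_real (w x) * (f x * cnj (g x))) has_sum S) I"
  shows "(cmod S)\<^sup>2 \<le> P * Q"
proof (cases "Q = 0")
  case True
  then have "w x * (cmod (g x))\<^sup>2 = 0" if "x \<in> I" for x
    using nonneg_has_sum_le_0D[OF Q] w_nonneg that by simp
  then have "of_real (w x) * (f x * cnj (g x)) = 0" if "x \<in> I" for x
    using that by auto
  then have "S = 0"
    using has_sum_unique[OF S has_sum_0] by blast
  then show ?thesis
    using True by simp
next
  case False
  moreover have "Q \<ge> 0"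
    using Q by (rule has_sum_nonneg) (simp add: w_nonneg)
  ultimately have "Q > 0"
    by simp
  have S_cnj: "((\<lambda>x. of_real (w x) * (g x * cnj (f x))) has_sum cnj S) I"
    using S by (subst has_sum_cnj_iff[symmetric]) (simp add: mult_ac)
  \<comment> \<open>\<open>Q f - S g\<close> is \<open>w\<close>-orthogonal to \<open>g\<close>, and its squared \<open>w\<close>-norm is \<open>Q (P Q - |S|\<^sup>2)\<close>.\<close>
  have "((\<lambda>x. (of_real Q)\<^sup>2 * of_real (w x * (cmod (f x))\<^sup>2)
        + (- of_real Q * cnj S) * (of_real (w x) * (f x * cnj (g x)))
        + (- of_real Q * S) * (of_real (w x) * (g x * cnj (f x)))
        + (S * cnj S) * of_real (w x * (cmod (g x))\<^sup>2))
      has_sum ((of_real Q)\<^sup>2 * of_real P + (- of_real Q * cnj S) * S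
        + (- of_real Q * S) * cnj S + (S * cnj S) * of_real Q)) I"
    by (intro has_sum_add has_sum_cmult_right S S_cnj has_sum_of_real P Q)
  also have "(\<lambda>x. (of_real Q)\<^sup>2 * of_real (w x * (cmod (f x))\<^sup>2)
        + (- of_real Q * cnj S) * (of_real (w x) * (f x * cnj (g x)))
        + (- of_real Q * S) * (of_real (w x) * (g x * cnj (f x)))
        + (S * cnj S) * of_real (w x * (cmod (g x))\<^sup>2))
      = (\<lambda>x. of_real (w x * (cmod (of_real Q * f x - S * g x))\<^sup>2))"
    unfolding of_real_mult complex_norm_square
      complex_cnj_diff complex_cnj_mult complex_cnj_complex_of_real
    by (rule ext) algebra
  also have "(of_real Q)\<^sup>2 * of_real P + (- of_real Q * cnj S) * S
        + (- of_real Q * S) * cnj S + (S * cnj S) * of_real Q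
      = (of_real (Q * (P * Q - (cmod S)\<^sup>2)) :: complex)"
    unfolding of_real_mult of_real_diff complex_norm_square by algebra
  finally have "0 \<le> Q * (P * Q - (cmod S)\<^sup>2)"
    unfolding has_sum_of_real_iff by (rule has_sum_nonneg) (simp add: w_nonneg)
  with \<open>Q > 0\<close> show ?thesis
    by (simp add: zero_le_mult_iff)
qed

lemma has_sum_covariance_bound:
  fixes w t :: "'a \<Rightarrow> real" and e :: "'a \<Rightarrow> complex"
  assumes w_nonneg: "\<And>x. x \<in> I \<Longrightarrow> w x \<ge> 0"
    and e_unimodular: "\<And>x. x \<in> I \<Longrightarrow> cmod (e x) = 1"
    and A: "(w has_sum A) I"
    and B: "((\<lambda>x. t x * w x) has_sum B) I"
    and C: "((\<lambda>x. (t x)\<^sup>2 * w x) has_sum C) I"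
    and G: "((\<lambda>x. of_real (w x) * e x) has_sum G) I"
    and G1: "((\<lambda>x. of_real (t x * w x) * e x) has_sum G1) I"
  shows "(cmod (of_real A * G1 - of_real B * G))\<^sup>2 \<le> (A * C - B\<^sup>2) * (A\<^sup>2 - (cmod G)\<^sup>2)"
proof -
  define X where "X = of_real A * G1 - of_real B * G"
  have G_cnj: "((\<lambda>x. of_real (w x) * cnj (e x)) has_sum cnj G) I"
    using G by (subst has_sum_cnj_iff[symmetric]) simp
  have G1_cnj: "((\<lambda>x. of_real (t x * w x) * cnj (e x)) has_sum cnj G1) I"
    using G1 by (subst has_sum_cnj_iff[symmetric]) simp
  have var_t: "((\<lambda>x. w x * (cmod (complex_of_real (A * t x - B)))\<^sup>2) has_sum A * (A * C - B\<^sup>2)) I"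
  proof -
    have "((\<lambda>x. A\<^sup>2 * ((t x)\<^sup>2 * w x) + (- 2 * A * B) * (t x * w x) + B\<^sup>2 * w x)
        has_sum A\<^sup>2 * C + (- 2 * A * B) * B + B\<^sup>2 * A) I"
      by (intro has_sum_add has_sum_cmult_right A B C)
    also have "(\<lambda>x. A\<^sup>2 * ((t x)\<^sup>2 * w x) + (- 2 * A * B) * (t x * w x) + B\<^sup>2 * w x)
        = (\<lambda>x. w x * (cmod (complex_of_real (A * t x - B)))\<^sup>2)"
      unfolding norm_of_real power2_abs by (rule ext) algebra
    also have "A\<^sup>2 * C + (- 2 * A * B) * B + B\<^sup>2 * A = A * (A * C - B\<^sup>2)"
      by algebra
    finally show ?thesis .
  qed
  have var_e: "((\<lambda>x. w x * (cmod (of_real A * e x - G))\<^sup>2) has_sum A * (A\<^sup>2 - (cmod G)\<^sup>2)) I"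
  proof -
    have "((\<lambda>x. (of_real A)\<^sup>2 * of_real (w x) + (- of_real A * cnj G) * (of_real (w x) * e x)
          + (- of_real A * G) * (of_real (w x) * cnj (e x)) + (G * cnj G) * of_real (w x))
        has_sum (of_real A)\<^sup>2 * of_real A + (- of_real A * cnj G) * G
          + (- of_real A * G) * cnj G + (G * cnj G) * of_real A) I"
      by (intro has_sum_add has_sum_cmult_right has_sum_of_real A G G_cnj)
    also have "?this \<longleftrightarrow> ((\<lambda>x. of_real (w x * (cmod (of_real A * e x - G))\<^sup>2)) has_sum
        (of_real A)\<^sup>2 * of_real A + (- of_real A * cnj G) * G
          + (- of_real A * G) * cnj G + (G * cnj G) * of_real A) I"
    proof (rule has_sum_cong)
      fix x
      assume "x \<in> I"
      then have "e x * cnj (e x) = 1"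
        using complex_norm_square[of "e x"] e_unimodular by simp
      then show "(of_real A)\<^sup>2 * of_real (w x) + (- of_real A * cnj G) * (of_real (w x) * e x)
          + (- of_real A * G) * (of_real (w x) * cnj (e x)) + (G * cnj G) * of_real (w x)
        = of_real (w x * (cmod (of_real A * e x - G))\<^sup>2)"
        unfolding of_real_mult complex_norm_square
          complex_cnj_diff complex_cnj_mult complex_cnj_complex_of_real
        by algebra
    qed
    also have "(of_real A)\<^sup>2 * of_real A + (- of_real A * cnj G) * G
          + (- of_real A * G) * cnj G + (G * cnj G) * of_real A
        = (of_real (A * (A\<^sup>2 - (cmod G)\<^sup>2)) :: complex)"
      unfolding of_real_mult of_real_diff complex_norm_square unfolding of_real_power by algebra
    finally show ?thesis
      by (simp only: has_sum_of_real_iff)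
  qed
  have cov: "((\<lambda>x. of_real (w x) * (of_real (A * t x - B) * cnj (of_real A * e x - G)))
      has_sum of_real A * cnj X) I"
  proof -
    have "((\<lambda>x. (of_real A)\<^sup>2 * (of_real (t x * w x) * cnj (e x))
          + (- of_real A * cnj G) * of_real (t x * w x)
          + (- of_real (A * B)) * (of_real (w x) * cnj (e x)) + (of_real B * cnj G) * of_real (w x))
        has_sum (of_real A)\<^sup>2 * cnj G1 + (- of_real A * cnj G) * of_real B
          + (- of_real (A * B)) * cnj G + (of_real B * cnj G) * of_real A) I"
      by (intro has_sum_add has_sum_cmult_right has_sum_of_real A B G_cnj G1_cnj)
    also have "(\<lambda>x. (of_real A)\<^sup>2 * (of_real (t x * w x) * cnj (e x))
          + (- of_real A * cnj G) * of_real (t x * w x)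
          + (- of_real (A * B)) * (of_real (w x) * cnj (e x)) + (of_real B * cnj G) * of_real (w x))
        = (\<lambda>x. of_real (w x) * (of_real (A * t x - B) * cnj (of_real A * e x - G)))"
      unfolding of_real_mult of_real_diff complex_cnj_diff complex_cnj_mult complex_cnj_complex_of_real
      by (rule ext) algebra
    also have "(of_real A)\<^sup>2 * cnj G1 + (- of_real A * cnj G) * of_real B
          + (- of_real (A * B)) * cnj G + (of_real B * cnj G) * of_real A = of_real A * cnj X"
      unfolding X_def of_real_mult complex_cnj_diff complex_cnj_mult complex_cnj_complex_of_real
      by algebra
    finally show ?thesis .
  qed
  have "(cmod (of_real A * cnj X))\<^sup>2 \<le> A * (A * C - B\<^sup>2) * (A * (A\<^sup>2 - (cmod G)\<^sup>2))"
    using w_nonneg var_t var_e cov by (rule has_sum_weighted_Cauchy_Schwarz)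
  then have "A\<^sup>2 * (cmod X)\<^sup>2 \<le> A\<^sup>2 * ((A * C - B\<^sup>2) * (A\<^sup>2 - (cmod G)\<^sup>2))"
    by (simp add: norm_mult power_mult_distrib power2_eq_square mult_ac)
  moreover have "A = 0 \<Longrightarrow> (cmod X)\<^sup>2 = (A * C - B\<^sup>2) * (A\<^sup>2 - (cmod G)\<^sup>2)"
    by (simp add: X_def norm_mult power_mult_distrib)
  ultimately show ?thesis
    unfolding X_def[symmetric] by (cases "A = 0") simp_all
qed

lemma has_sum_gj:
  assumes "(\<lambda>n. real_of_int n ^ j * (c n)\<^sup>2) summable_on UNIV"
  shows "((\<lambda>n. complex_of_real (real_of_int n ^ j * (c n)\<^sup>2) * cis (real_of_int n * \<theta>))
    has_sum gj j c \<theta>) UNIV"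
proof -
  have "(\<lambda>n. norm (real_of_int n ^ j * (c n)\<^sup>2)) summable_on UNIV"
    using assms by (rule summable_on_iff_abs_summable_on_real[THEN iffD1])
  then have "(\<lambda>n. norm (complex_of_real (real_of_int n ^ j * (c n)\<^sup>2) * cis (real_of_int n * \<theta>)))
      summable_on UNIV"
    by (simp only: norm_mult norm_cis mult_1_right norm_of_real real_norm_def)
  then show ?thesis
    unfolding gj_def by (rule has_sum_infsum[OF abs_summable_summable])
qed

lemma gj_at_0:
  assumes "((\<lambda>n. real_of_int n ^ j * (c n)\<^sup>2) has_sum M) UNIV"
  shows "gj j c 0 = complex_of_real M"
  unfolding gj_def mult_zero_right cis_zero mult_1_right
  using has_sum_of_real[OF assms] by (rule infsumI)

theorem claim5p2:
  fixes c :: "int \<Rightarrow> real" and \<theta> :: real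
  assumes "(\<lambda>n::int. (real_of_int n)^2 * (c n)^2) summable_on UNIV"
  shows "(cmod (gj 0 c 0 * gj 1 c \<theta> - gj 1 c 0 * gj 0 c \<theta>))^2
     \<le> (Re (gj 0 c 0) * Re (gj 2 c 0) - (Re (gj 1 c 0))^2)
        * ((Re (gj 0 c 0))^2 - (cmod (gj 0 c \<theta>))^2)"
proof -
  have moment_summable: "(\<lambda>n. real_of_int n ^ j * (c n)\<^sup>2) summable_on UNIV" if "j \<le> 2" for j
    using summable_on_lower_moments[of "\<lambda>n. (c n)\<^sup>2", OF _ assms] assms that
    by (auto simp: le_Suc_eq numeral_2_eq_2)
  define M where "M j = (\<Sum>\<^sub>\<infinity>n. real_of_int n ^ j * (c n)\<^sup>2)" for j
  have moment: "((\<lambda>n. real_of_int n ^ j * (c n)\<^sup>2) has_sum M j) UNIV" if "j \<le> 2" for j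
    unfolding M_def using moment_summable[OF that] by (rule has_sum_infsum)
  have "(cmod (of_real (M 0) * gj 1 c \<theta> - of_real (M 1) * gj 0 c \<theta>))\<^sup>2
      \<le> (M 0 * M 2 - (M 1)\<^sup>2) * ((M 0)\<^sup>2 - (cmod (gj 0 c \<theta>))\<^sup>2)"
    using moment[of 0] moment[of 1] moment[of 2]
      has_sum_gj[OF moment_summable, of 0 \<theta>] has_sum_gj[OF moment_summable, of 1 \<theta>]
    by (intro has_sum_covariance_bound[where w = "\<lambda>n. (c n)\<^sup>2" and t = real_of_int
          and e = "\<lambda>n. cis (real_of_int n * \<theta>)" and I = UNIV])
      (simp_all only: le0 one_le_numeral order_refl simp_thms
        power_0 power_one_right mult_1_left zero_le_power2 norm_cis)
  then show ?thesis
    using gj_at_0[OF moment] by simp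
qed

end
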